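(* The size $z_{SS}$ of the non-self-referencing LZSS factorization satisfies (the alphabet being allowed to contain as many distinct characters as needed): substitutions: $\liminf_{n\to\infty}\mathsf{MS}_{\mathrm{sub}}(z_{SS},n)\ge 3$, $\mathsf{AS}_{\mathrm{sub}}(z_{SS},n)\ge 2z_{SS}-\Theta(\sqrt{z_{SS}})$ and $\mathsf{AS}_{\mathrm{sub}}(z_{SS},n)=\Omega(\sqrt n)$; insertions: $\liminf_{n\to\infty}\mathsf{MS}_{\mathrm{ins}}(z_{SS},n)\ge 2$, $\mathsf{AS}_{\mathrm{ins}}(z_{SS},n)\ge z_{SS}-\Theta(\sqrt{z_{SS}})$ and $\mathsf{AS}_{\mathrm{ins}}(z_{SS},n)=\Omega(\sqrt n)$; deletions: $\liminf_{n\to\infty}\mathsf{MS}_{\mathrm{del}}(z_{SS},n)\ge 3$, $\mathsf{AS}_{\mathrm{del}}(z_{SS},n)\ge 2z_{SS}-\Theta(\sqrt{z_{SS}})$ and $\mathsf{AS}_{\mathrm{del}}(z_{SS},n)=\Omega(\sqrt n)$.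
   Context: $\mathsf{ed}$ is the edit distance. $\mathsf{MS}_{\mathrm{sub}}(C,n)=\max_{T\in\Sigma^n}\{C(T')/C(T): T'\in\Sigma^n,\ \mathsf{ed}(T,T')=1\}$, with $\mathsf{MS}_{\mathrm{ins}},\mathsf{MS}_{\mathrm{del}}$ analogous for $T'$ of length $n+1$, resp. $n-1$, and $\mathsf{AS}_\ast$ analogous with $C(T')-C(T)$. Bounds in terms of $z_{SS}$ refer to $z_{SS}(T)$ of the original string and assert existence of strings $T$ (with $z_{SS}(T)$ arbitrarily large) and edited $T'$ achieving them. The non-self-referencing LZSS factorization of $T$ is $T=f_1\cdots f_z$ where each $f_i$ is either the first occurrence in $T$ of a character, or the longest prefix of $f_i\cdots f_z$ that occurs as a substring of $f_1\cdots f_{i-1}$; $z_{SS}(T)=z$. *)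

theory Defs
  imports Complex_Main "HOL-Library.Sublist" "HOL-Library.Landau_Symbols" "HOL-Library.Liminf_Limsup" "HOL-Library.Extended_Real"
begin

fun ed :: "'a list \<Rightarrow> 'a list \<Rightarrow> nat" where
  "ed [] ys = length ys"
| "ed (x # xs) [] = length (x # xs)"
| "ed (x # xs) (y # ys) =
     min (min (Suc (ed xs (y # ys))) (Suc (ed (x # xs) ys)))
         (ed xs ys + (if x = y then 0 else 1))"

definition lpf :: "'a list \<Rightarrow> 'a list \<Rightarrow> nat" where
  "lpf p r = (GREATEST k. k \<le> length r \<and> sublist (take k r) p)"

lemma lpf_ge1:
  assumes "c \<in> set p"
  shows "1 \<le> lpf p (c # s)"
proof -
  obtain u v where "p = u @ c # v" using assms by (meson split_list)
  hence "sublist [c] p" unfolding sublist_def by (intro exI[of _ u] exI[of _ v]) simp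
  hence P: "1 \<le> length (c#s) \<and> sublist (take 1 (c#s)) p" by simp
  show ?thesis unfolding lpf_def
    by (rule Greatest_le_nat[where P = "\<lambda>k. k \<le> length (c#s) \<and> sublist (take k (c#s)) p" and b = "length (c#s)", OF P]) simp
qed

text \<open>lzs p r: number of factors produced when factorizing the remaining suffix r,
  given the already factorized prefix p.\<close>
function lzs :: "'a list \<Rightarrow> 'a list \<Rightarrow> nat" where
  "lzs p [] = 0"
| "lzs p (c # s) =
     (if c \<notin> set p then Suc (lzs (p @ [c]) s)
      else Suc (lzs (p @ take (lpf p (c # s)) (c # s)) (drop (lpf p (c # s)) (c # s))))"
  by pat_completeness auto
termination
proof (relation "measure (\<lambda>(p, r). length r)")
  fix p :: "'a list" and c s
  assume "\<not> c \<notin> set p"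
  hence "1 \<le> lpf p (c # s)" by (intro lpf_ge1) simp
  thus "((p @ take (lpf p (c # s)) (c # s), drop (lpf p (c # s)) (c # s)), p, c # s)
        \<in> measure (\<lambda>(p, r). length r)" by simp
qed auto

definition zss :: "'a list \<Rightarrow> nat" where
  "zss T = lzs [] T"

section \<open>Multiplicative and additive sensitivity (alphabet: nat, i.e. unboundedly many characters)\<close>

definition MS_sub :: "nat \<Rightarrow> real" where
  "MS_sub n = Sup {real (zss T') / real (zss T) | T T' :: nat list.
     length T = n \<and> length T' = n \<and> ed T T' = 1}"
definition MS_ins :: "nat \<Rightarrow> real" where
  "MS_ins n = Sup {real (zss T') / real (zss T) | T T' :: nat list.
     length T = n \<and> length T' = n + 1 \<and> ed T T' = 1}"
definition MS_del :: "nat \<Rightarrow> real" where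
  "MS_del n = Sup {real (zss T') / real (zss T) | T T' :: nat list.
     length T = n \<and> length T' + 1 = n \<and> ed T T' = 1}"

definition AS_sub :: "nat \<Rightarrow> real" where
  "AS_sub n = Sup {real (zss T') - real (zss T) | T T' :: nat list.
     length T = n \<and> length T' = n \<and> ed T T' = 1}"
definition AS_ins :: "nat \<Rightarrow> real" where
  "AS_ins n = Sup {real (zss T') - real (zss T) | T T' :: nat list.
     length T = n \<and> length T' = n + 1 \<and> ed T T' = 1}"
definition AS_del :: "nat \<Rightarrow> real" where
  "AS_del n = Sup {real (zss T') - real (zss T) | T T' :: nat list.
     length T = n \<and> length T' + 1 = n \<and> ed T T' = 1}"

end

theory Submission
  imports Defs
begin

text \<open>
  The texts are \<open>T = 0\<^sup>K X Y 4 w\<^sub>1 \<dots> w\<^sub>k\<close> with words \<open>w\<^sub>i = 0\<^sup>i 1 Y[1..q(i)]\<close>, where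
  \<open>X = 1\<close> in the original text and the edit replaces this \<open>1\<close> by \<open>5\<close>, deletes it, or inserts \<open>5\<close>
  in front of it. In the original text every word occurs in the prefix \<open>0\<^sup>K 1 Y 4\<close> and is a single
  phrase, while runs, the block \<open>Y\<close> and a padding run cost only logarithmically many phrases
  because repetitions are parsed by doubling. After the edit, \<open>0\<^sup>i 1\<close> and \<open>1 Y[1..q(i)] 0\<close> no longer
  occur before \<open>w\<^sub>i\<close>, so every word costs two phrases; for \<open>Y = (2\<^sup>r 3)\<^sup>r\<close> and
  \<open>q(i) = i(r + 2)\<close> without any \<open>1\<close> in the prefix even \<open>2\<^sup>r\<^sup>-\<^sup>i 3 2\<^sup>i\<^sup>+\<^sup>1 0\<close> is new, so every word costs
  three. With about \<open>r\<close> words and length \<open>\<Theta>(r\<^sup>3)\<close> this gives the multiplicative bounds and the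
  additive bounds \<open>(c - 1) z - O(\<surd>z)\<close>; the texts with \<open>Y = 2\<^sup>m\<close> and \<open>q(i) = i\<close> have length
  \<open>\<Theta>(m\<^sup>2)\<close> and gain \<open>m - O(\<surd>m)\<close> phrases, i.e. \<open>\<Omega>(\<surd>n)\<close>.
\<close>

section \<open>Greedy LZSS parsing\<close>

lemma lpf_le_length: "lpf p r \<le> length r"
  and sublist_take_lpf: "sublist (take (lpf p r) r) p"
proof -
  have "lpf p r \<le> length r \<and> sublist (take (lpf p r) r) p"
    unfolding lpf_def by (rule GreatestI_nat[where k = 0 and b = "length r"]) auto
  thus "lpf p r \<le> length r" "sublist (take (lpf p r) r) p" by auto
qed

lemma le_lpfI: "k \<le> length r \<Longrightarrow> sublist (take k r) p \<Longrightarrow> k \<le> lpf p r"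
  unfolding lpf_def by (rule Greatest_le_nat[where b = "length r"]) auto

lemma append_eq_append_cases:
  assumes "u @ s = f @ s'"
  obtains (shorter) u2 where "u = f @ u2" "s' = u2 @ s"
    | (longer) g where "f = u @ g" "s = g @ s'" "g \<noteq> []"
proof -
  obtain us where "u = f @ us \<and> us @ s = s' \<or> u @ us = f \<and> s = us @ s'"
    using assms by (auto simp: append_eq_append_conv2)
  thus thesis using that by (cases "us = []") auto
qed

lemma lzs_first_phrase:
  assumes "t \<noteq> []"
  obtains f s where "t = f @ s" "f \<noteq> []" "sublist f p \<or> length f = 1"
    "\<And>v. prefix v t \<Longrightarrow> sublist v p \<Longrightarrow> length v \<le> length f"
    "lzs p t = Suc (lzs (p @ f) s)"
proof -
  obtain c s where t: "t = c # s" using assms by (cases t) auto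
  show thesis
  proof (cases "c \<in> set p")
    case True
    define L where "L = lpf p t"
    have "1 \<le> L" unfolding L_def t using True by (rule lpf_ge1)
    moreover have "L \<le> length t" unfolding L_def by (rule lpf_le_length)
    moreover have "length v \<le> L" if "prefix v t" "sublist v p" for v
      using that le_lpfI[of "length v" t p] by (auto simp: L_def prefix_def)
    ultimately show thesis
      using that[of "take L t" "drop L t"] sublist_take_lpf[of p t] True
      by (simp add: L_def t min_absorb1)
  next
    case False
    have "length v \<le> 1" if "prefix v t" "sublist v p" for v
    proof (cases v)
      case (Cons a v')
      hence "a = c" "a \<in> set p" using that t by (auto dest: set_mono_sublist)
      thus ?thesis using False by simp
    qed simp
    thus thesis using that[of "[c]" s] False t by auto
  qed
qed

declare lzs.simps(2) [simp del]

lemma lzs_pos: "s \<noteq> [] \<Longrightarrow> 1 \<le> lzs p s"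
  by (metis One_nat_def Suc_le_mono le0 lzs_first_phrase)

text \<open>Greedy parsing is optimal.\<close>
lemma lzs_append_dict_le: "lzs (p @ u) s \<le> lzs p (u @ s)"
proof (induction "length (u @ s)" arbitrary: p u s rule: less_induct)
  case less
  show ?case
  proof (cases "u = []")
    case False
    then obtain f s' where fs: "u @ s = f @ s'" "f \<noteq> []" "sublist f p \<or> length f = 1"
      "lzs p (u @ s) = Suc (lzs (p @ f) s')"
      using lzs_first_phrase[of "u @ s" p] by (metis append_is_Nil_conv)
    from fs(1) show ?thesis
    proof (cases rule: append_eq_append_cases)
      case (shorter u2)
      thus ?thesis using less[of u2 s "p @ f"] fs by simp
    next
      case (longer g)
      have "sublist f p" using fs(3) longer \<open>u \<noteq> []\<close> by (cases u) auto
      hence "sublist g (p @ u)"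
        using longer(1) by (metis sublist_append_leftI sublist_append_rightI sublist_order.order_trans)
      obtain h s'' where hs: "g @ s' = h @ s''" "length g \<le> length h"
        "lzs (p @ u) (g @ s') = Suc (lzs (p @ u @ h) s'')"
      proof (rule lzs_first_phrase[of "g @ s'" "p @ u"])
        fix h s'' assume h: "g @ s' = h @ s''" "lzs (p @ u) (g @ s') = Suc (lzs ((p @ u) @ h) s'')"
          and longest: "\<And>v. prefix v (g @ s') \<Longrightarrow> sublist v (p @ u) \<Longrightarrow> length v \<le> length h"
        have "length g \<le> length h" by (rule longest) (simp_all add: \<open>sublist g (p @ u)\<close>)
        with h show thesis by (intro that) simp_all
      qed (use longer in simp)
      from hs(1,2) obtain h' where "h = g @ h'" "s' = h' @ s''"
        by (auto elim: append_eq_append_cases)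
      moreover have "lzs (p @ u @ g @ h') s'' \<le> lzs (p @ u @ g) (h' @ s'')"
        using less[of h' s'' "p @ u @ g"] longer \<open>s' = h' @ s''\<close> by simp
      ultimately show ?thesis using fs(4) longer hs by simp
    qed
  qed simp
qed

lemma lzs_phrase_le:
  assumes "u \<noteq> []" "sublist u p \<or> length u = 1"
  shows "lzs p (u @ s) \<le> Suc (lzs (p @ u) s)"
proof (rule lzs_first_phrase[of "u @ s" p])
  fix f s' assume f: "u @ s = f @ s'" "f \<noteq> []" "lzs p (u @ s) = Suc (lzs (p @ f) s')"
    and longest: "\<And>v. prefix v (u @ s) \<Longrightarrow> sublist v p \<Longrightarrow> length v \<le> length f"
  have "length u \<le> length f"
  proof (cases "sublist u p")
    case True thus ?thesis using longest[of u] by simp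
  next
    case False thus ?thesis using assms(2) f(2) by (cases f) auto
  qed
  then obtain g where "f = u @ g" "s = g @ s'"
    using f(1) by (auto elim: append_eq_append_cases)
  thus ?thesis using f(3) lzs_append_dict_le[of "p @ u" g s'] by simp
qed (use assms in simp)

lemma lzs_not_extendable_ge:
  assumes "u \<noteq> []" and no_extension: "s = [] \<or> \<not> sublist (u @ [hd s]) p"
  shows "Suc (lzs (p @ u) s) \<le> lzs p (u @ s)"
proof (rule lzs_first_phrase[of "u @ s" p])
  fix f s' assume f: "u @ s = f @ s'" "f \<noteq> []" "sublist f p \<or> length f = 1"
    "lzs p (u @ s) = Suc (lzs (p @ f) s')"
  from f(1) show ?thesis
  proof (cases rule: append_eq_append_cases)
    case (shorter u2)
    thus ?thesis using f(4) lzs_append_dict_le[of "p @ f" u2 s] by simp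
  next
    case (longer g)
    hence "sublist (u @ [hd s]) f" using assms(1)
      by (metis append.assoc hd_append2 list.collapse append_Cons append_Nil sublist_append_rightI
          sublist_appendI)
    moreover have "sublist f p" using f(3) longer assms(1) by (cases u) auto
    ultimately show ?thesis using no_extension longer by (auto dest: sublist_order.order_trans)
  qed
qed (use assms in simp)

lemma lzs_append_le: "lzs p (u @ s) \<le> lzs p u + lzs (p @ u) s"
proof (induction "length u" arbitrary: p u rule: less_induct)
  case less
  show ?case
  proof (cases "u = []")
    case False
    then obtain f u' where f: "u = f @ u'" "f \<noteq> []" "sublist f p \<or> length f = 1"
      "lzs p u = Suc (lzs (p @ f) u')"
      by (rule lzs_first_phrase)
    have "lzs p (u @ s) \<le> Suc (lzs (p @ f) (u' @ s))"
      using lzs_phrase_le[OF f(2,3), of "u' @ s"] f(1) by simp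
    also have "\<dots> \<le> Suc (lzs (p @ f) u' + lzs (p @ f @ u') s)"
      using less[of u' "p @ f"] f(1,2) by simp
    finally show ?thesis using f(1,4) by simp
  qed simp
qed

lemma lzs_le_append: "lzs p u \<le> lzs p (u @ s)"
proof (induction "length u" arbitrary: p u rule: less_induct)
  case less
  show ?case
  proof (cases "u = []")
    case False
    then obtain f s' where f: "u @ s = f @ s'" "f \<noteq> []" "sublist f p \<or> length f = 1"
      "lzs p (u @ s) = Suc (lzs (p @ f) s')"
      by (metis Nil_is_append_conv lzs_first_phrase)
    from f(1) show ?thesis
    proof (cases rule: append_eq_append_cases)
      case (shorter u2)
      have "lzs p u \<le> Suc (lzs (p @ f) u2)" using lzs_phrase_le[OF f(2,3)] shorter by simp
      also have "\<dots> \<le> Suc (lzs (p @ f) (u2 @ s))" using less[of u2 "p @ f"] shorter f(2) by simp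
      finally show ?thesis using f(4) shorter by simp
    next
      case (longer g)
      have "sublist f p" using f(3) longer False by (cases u) auto
      hence "sublist u p" using longer(1) by (metis sublist_append_rightI sublist_order.order_trans)
      thus ?thesis using lzs_phrase_le[OF False, of p "[]"] f(4) by simp
    qed
  qed simp
qed

lemma lzs_le_length: "lzs p s \<le> length s"
proof (induction s arbitrary: p)
  case (Cons c s)
  have "lzs p [c] \<le> 1" using lzs_phrase_le[of "[c]" p "[]"] by simp
  thus ?case using lzs_append_le[of p "[c]" s] Cons[of "p @ [c]"] by simp
qed simp

text \<open>Every phrase is at most as long as the text preceding it, so the parsed prefix at most doubles
  with each phrase.\<close>
lemma length_le_pow2_lzs: "length p + length s + 1 \<le> 2 ^ lzs p s * (length p + 1)"
proof (induction "length s" arbitrary: p s rule: less_induct)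
  case less
  show ?case
  proof (cases "s = []")
    case False
    then obtain f s' where f: "s = f @ s'" "f \<noteq> []" "sublist f p \<or> length f = 1"
      "lzs p s = Suc (lzs (p @ f) s')"
      by (rule lzs_first_phrase)
    have "length f \<le> length p + 1" using f(3) by (auto dest: sublist_length_le)
    have "length p + length s + 1 \<le> 2 ^ lzs (p @ f) s' * (length (p @ f) + 1)"
      using less[of s' "p @ f"] f(1,2) by simp
    also have "\<dots> \<le> 2 ^ lzs (p @ f) s' * (2 * (length p + 1))"
      using \<open>length f \<le> length p + 1\<close> by (intro mult_le_mono2) simp
    finally show ?thesis using f(4) by (simp add: ac_simps)
  qed simp
qed

corollary length_less_pow2_zss: "length T < 2 ^ zss T"
  using length_le_pow2_lzs[of "[]" T] by (simp add: zss_def)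

text \<open>Runs are parsed by doubling: with \<open>j\<close> copies of \<open>u\<close> already parsed, each phrase can copy all
  of them.\<close>
lemma lzs_concat_replicate_le:
  assumes "u \<noteq> []" "1 \<le> j" "i \<le> j * (2 ^ n - 1)"
  shows "lzs (p @ concat (replicate j u)) (concat (replicate i u) @ s)
    \<le> n + lzs (p @ concat (replicate (j + i) u)) s"
  using assms(2,3)
proof (induction n arbitrary: j i)
  case (Suc n)
  show ?case
  proof (cases "i \<le> j")
    case True
    show ?thesis
    proof (cases "i = 0")
      case False
      have "concat (replicate j u) = concat (replicate i u) @ concat (replicate (j - i) u)"
        using True by (metis concat_append le_add_diff_inverse replicate_add)
      hence "sublist (concat (replicate i u)) (p @ concat (replicate j u))" by simp
      moreover have "concat (replicate i u) \<noteq> []" using False assms(1) by simp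
      ultimately show ?thesis
        using lzs_phrase_le[of "concat (replicate i u)" "p @ concat (replicate j u)" s]
        by (simp flip: concat_append replicate_add)
    qed simp
  next
    case False
    have "concat (replicate i u) = concat (replicate j u) @ concat (replicate (i - j) u)"
      using False by (metis concat_append le_add_diff_inverse less_or_eq_imp_le not_le replicate_add)
    moreover have "lzs (p @ concat (replicate j u)) (concat (replicate j u) @ concat (replicate (i - j) u) @ s)
        \<le> Suc (lzs (p @ concat (replicate (j + j) u)) (concat (replicate (i - j) u) @ s))"
      using lzs_phrase_le[of "concat (replicate j u)" "p @ concat (replicate j u)"] assms(1) Suc.prems(1)
      by (simp add: replicate_add)
    moreover have "i - j \<le> (j + j) * (2 ^ n - 1)"
      using Suc.prems(2) by (simp add: algebra_simps diff_mult_distrib2)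
    hence "lzs (p @ concat (replicate (j + j) u)) (concat (replicate (i - j) u) @ s)
        \<le> n + lzs (p @ concat (replicate (j + i) u)) s"
      using Suc.IH[of "j + j" "i - j"] Suc.prems(1) False by simp
    ultimately show ?thesis by simp
  qed
qed simp

corollary lzs_replicate_le:
  assumes "k \<le> 2 ^ n"
  shows "lzs p (replicate k c @ s) \<le> Suc n + lzs (p @ replicate k c) s"
proof (cases k)
  case (Suc k')
  have "lzs p ([c] @ replicate k' c @ s) \<le> Suc (lzs (p @ [c]) (replicate k' c @ s))"
    by (rule lzs_phrase_le) simp_all
  moreover have "concat (replicate m [c]) = replicate m c" for m by (induction m) auto
  hence "lzs (p @ [c]) (replicate k' c @ s) \<le> n + lzs (p @ replicate k c) s"
    using lzs_concat_replicate_le[of "[c]" 1 k' n p s] assms Suc by simp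
  ultimately show ?thesis using Suc by (simp add: replicate_append_same)
qed simp

lemma ex_pow2_ge_sqrt: "\<exists>n. x ^ k \<le> 2 ^ n \<and> real n \<le> 2 * real k * (sqrt (real x) + 1)"
proof -
  define s where "s = nat \<lceil>sqrt (real x)\<rceil>"
  have s: "real s = of_int \<lceil>sqrt (real x)\<rceil>" unfolding s_def by simp
  have "real x = sqrt (real x) ^ 2" by simp
  also have "\<dots> \<le> real s ^ 2" using s by (intro power_mono) simp_all
  finally have "x \<le> s ^ 2" by (simp flip: of_nat_power)
  also have "\<dots> \<le> (2 ^ s) ^ 2" by (intro power_mono) (simp_all add: less_exp less_imp_le)
  finally have "x ^ k \<le> ((2 ^ s) ^ 2) ^ k" by (rule power_mono) simp
  also have "\<dots> = 2 ^ (2 * k * s)" by (simp flip: power_mult add: ac_simps)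
  finally have "x ^ k \<le> 2 ^ (2 * k * s)" .
  moreover have "real s \<le> sqrt (real x) + 1" using s of_int_ceiling_le_add_one by simp
  ultimately show ?thesis
    by (intro exI[of _ "2 * k * s"]) (simp add: mult_left_mono)
qed

lemma ed_refl [simp]: "ed xs xs = 0"
  by (induction xs) auto

lemma ed_eq_0_iff [simp]: "ed xs ys = 0 \<longleftrightarrow> xs = ys"
proof
  show "ed xs ys = 0 \<Longrightarrow> xs = ys"
    by (induction xs ys rule: ed.induct) (auto simp: min_def split: if_splits)
qed simp

lemma ed_append_left_le: "ed (u @ xs) (u @ ys) \<le> ed xs ys"
  by (induction u) auto

lemma ed_substitute: "x \<noteq> y \<Longrightarrow> ed (u @ x # r) (u @ y # r) = 1"
  and ed_delete: "ed (u @ x # r) (u @ r) = 1"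
  and ed_insert: "ed (u @ r) (u @ x # r) = 1"
proof -
  have one: "ed xs ys = 1" if "ed xs ys \<le> 1" "xs \<noteq> ys" for xs ys :: "'a list"
    using that ed_eq_0_iff[of xs ys] by linarith
  have "ed (x # r) (y # r) \<le> 1" "ed (x # r) r \<le> 1" "ed r (x # r) \<le> 1"
    by (cases r; simp)+
  hence le: "ed (u @ x # r) (u @ y # r) \<le> 1" "ed (u @ x # r) (u @ r) \<le> 1"
    "ed (u @ r) (u @ x # r) \<le> 1"
    using ed_append_left_le order_trans by blast+
  have "u @ x # r \<noteq> u @ r" by (metis length_append length_Cons n_not_Suc_n add_Suc_right)
  thus "ed (u @ x # r) (u @ r) = 1" "ed (u @ r) (u @ x # r) = 1" using one le(2,3) by auto
  show "x \<noteq> y \<Longrightarrow> ed (u @ x # r) (u @ y # r) = 1" using one le(1) by simp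
qed

section \<open>The construction\<close>

text \<open>The dictionary part \<open>0\<^sup>K X Y 4\<close> of the texts: \<open>X = [1]\<close> in the original text, and \<open>X = [5]\<close>,
  \<open>X = []\<close> and \<open>X = [5, 1]\<close> after a substitution, deletion and insertion.\<close>
definition dict :: "nat \<Rightarrow> nat list \<Rightarrow> nat list \<Rightarrow> nat list" where
  "dict K X Y = replicate K 0 @ X @ Y @ [4]"

definition word :: "nat list \<Rightarrow> (nat \<Rightarrow> nat) \<Rightarrow> nat \<Rightarrow> nat list" where
  "word Y q i = replicate i 0 @ 1 # take (q i) Y"

primrec words :: "nat list \<Rightarrow> (nat \<Rightarrow> nat) \<Rightarrow> nat \<Rightarrow> nat list" where
  "words Y q 0 = []"
| "words Y q (Suc k) = words Y q k @ word Y q (Suc k)"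

lemma append_Cons_eq_append_cases:
  assumes "A @ z # B = X @ Z"
  obtains (left) B' where "X = A @ z # B'" "B = B' @ Z"
    | (right) A' where "A = X @ A'" "Z = A' @ z # B"
  using assms by (auto simp: append_eq_append_conv2 Cons_eq_append_conv)

lemma replicate_append_eq_append_Cons:
  assumes "replicate n c @ R = u @ c # v" "c \<notin> set R"
  shows "\<exists>t<n. u = replicate t c"
proof (cases "length u < n")
  case True
  have "take (length u) (replicate n c @ R) = u" using assms(1) by simp
  thus ?thesis using True by (intro exI[of _ "length u"]) simp
next
  case False
  have "R = drop n (replicate n c @ R)" by simp
  also have "\<dots> = drop n u @ c # v" using assms(1) False by simp
  finally show ?thesis using assms(2) by simp
qed

lemma last_dict_words: "0 \<notin> set Y \<Longrightarrow> last (dict K X Y @ words Y q k) \<noteq> 0"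
proof (induction k)
  case (Suc k)
  have "last (take (q (Suc k)) Y) \<noteq> 0" if "take (q (Suc k)) Y \<noteq> []"
    using that Suc.prems by (metis last_in_set in_set_takeD)
  thus ?case by (auto simp: word_def)
qed (simp add: dict_def)

lemma words_split_one:
  assumes "1 \<notin> set Y" "words Y q k = A @ 1 # B"
  shows "\<exists>l R. l < k \<and> A = words Y q l @ replicate (Suc l) 0 \<and> B = take (q (Suc l)) Y @ R
    \<and> (R = [] \<or> hd R = 0)"
  using assms(2)
proof (induction k arbitrary: B)
  case (Suc k)
  have "A @ 1 # B = words Y q k @ word Y q (Suc k)" using Suc.prems by simp
  thus ?case
  proof (cases rule: append_Cons_eq_append_cases)
    case (left B')
    then obtain l R where "l < k" "A = words Y q l @ replicate (Suc l) 0"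
      "B' = take (q (Suc l)) Y @ R" "R = [] \<or> hd R = 0"
      using Suc.IH by blast
    moreover have "hd (R @ word Y q (Suc k)) = 0"
      using \<open>R = [] \<or> hd R = 0\<close> by (cases R) (simp_all add: word_def)
    ultimately show ?thesis using left(2)
      by (intro exI[of _ l] exI[of _ "R @ word Y q (Suc k)"]) simp
  next
    case (right A')
    have "1 \<notin> set (replicate (Suc k) (0::nat))" "1 \<notin> set (take (q (Suc k)) Y)"
      using assms(1) by (auto dest: in_set_takeD)
    moreover have "replicate (Suc k) 0 @ 1 # take (q (Suc k)) Y = A' @ 1 # B"
      using right(2) by (simp add: word_def)
    ultimately have "A' = replicate (Suc k) 0" "B = take (q (Suc k)) Y"
      by (subst (asm) append_Cons_eq_iff; simp)+
    thus ?thesis using right(1) by (intro exI[of _ k] exI[of _ "[]"]) simp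
  qed
qed simp

lemma words_split_zero:
  assumes "0 \<notin> set Y" "words Y q k = A @ 0 # B"
  shows "\<exists>l t. l < k \<and> t \<le> l \<and> A = words Y q l @ replicate t 0"
  using assms(2)
proof (induction k arbitrary: B)
  case (Suc k)
  have "A @ 0 # B = words Y q k @ word Y q (Suc k)" using Suc.prems by simp
  thus ?case
  proof (cases rule: append_Cons_eq_append_cases)
    case (left B')
    then obtain l t where "l < k" "t \<le> l" "A = words Y q l @ replicate t 0"
      using Suc.IH by blast
    thus ?thesis by (intro exI[of _ l] exI[of _ t]) simp
  next
    case (right A')
    have "replicate (Suc k) 0 @ 1 # take (q (Suc k)) Y = A' @ 0 # B"
      using right(2) by (simp add: word_def)
    moreover have "0 \<notin> set (1 # take (q (Suc k)) Y)" using assms(1) by (auto dest: in_set_takeD)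
    ultimately obtain t where "t < Suc k" "A' = replicate t 0"
      by (blast dest: replicate_append_eq_append_Cons)
    thus ?thesis using right(1) by (intro exI[of _ k] exI[of _ t]) simp
  qed
qed simp

lemma dict_split_one:
  assumes "1 \<notin> set Y" "X \<in> {[], [5], [5, 1]}" "dict K X Y = A @ 1 # B"
  shows "X = [5, 1] \<and> A = replicate K 0 @ [5] \<and> B = Y @ [4]"
proof -
  have "1 \<in> set (dict K X Y)" using assms(3) by simp
  hence "1 \<in> set X" using assms(1) by (auto simp: dict_def)
  hence X: "X = [5, 1]" using assms(2) by auto
  have "1 \<notin> set (replicate K (0::nat) @ [5])" "1 \<notin> set (Y @ [4])" using assms(1) by auto
  moreover have "(replicate K 0 @ [5]) @ 1 # (Y @ [4]) = A @ 1 # B"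
    using assms(3) X by (simp add: dict_def)
  ultimately show ?thesis using X by (subst (asm) append_Cons_eq_iff) auto
qed

lemma suffix_replicate_last:
  assumes "suffix (replicate i c) (Z @ replicate l c)" "l < i"
  shows "Z \<noteq> [] \<and> last Z = c"
proof -
  obtain zs where zs: "Z @ replicate l c = zs @ replicate i c" using assms(1) by (auto simp: suffix_def)
  have "i = (i - Suc l) + Suc l" using assms(2) by simp
  hence "replicate i c = replicate (i - Suc l) c @ [c] @ replicate l c"
    by (metis replicate_add replicate_Suc append_Cons append_Nil)
  hence "Z = zs @ replicate (i - Suc l) c @ [c]" using zs by simp
  thus ?thesis by simp
qed

text \<open>Every \<open>1\<close> after the dictionary is preceded by exactly \<open>l + 1 \<le> k\<close> zeros and a non-zero symbol.\<close>
lemma not_sublist_zeros_one: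
  assumes Y: "0 \<notin> set Y" "1 \<notin> set Y" and X: "X \<in> {[], [5], [5, 1]}" and "k < i"
  shows "\<not> sublist (replicate i 0 @ [1]) (dict K X Y @ words Y q k)"
proof
  assume "sublist (replicate i 0 @ [1]) (dict K X Y @ words Y q k)"
  then obtain A B where "(A @ replicate i 0) @ 1 # B = dict K X Y @ words Y q k"
    by (auto simp: sublist_def)
  thus False
  proof (cases rule: append_Cons_eq_append_cases)
    case (left B')
    hence "A @ replicate i 0 = replicate K 0 @ [5]" using dict_split_one[OF Y(2) X] by blast
    hence "last (A @ replicate i 0) = 5" by simp
    thus False using \<open>k < i\<close> by (simp add: last_append)
  next
    case (right A')
    then obtain l where "l < k" "A' = words Y q l @ replicate (Suc l) 0"
      using words_split_one[OF Y(2)] by metis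
    hence "suffix (replicate i 0) ((dict K X Y @ words Y q l) @ replicate (Suc l) 0)"
      using right(1) by (simp add: suffix_def) (metis append.assoc)
    hence "last (dict K X Y @ words Y q l) = 0"
      using suffix_replicate_last \<open>l < k\<close> \<open>k < i\<close> by (metis Suc_lessI less_trans_Suc)
    thus False using last_dict_words[OF Y(1)] by blast
  qed
qed

text \<open>A \<open>1\<close> is followed either by \<open>Y 4\<close> (inside \<open>X = [5, 1]\<close>) or by \<open>Y[1..q(l)]\<close> with \<open>l \<le> k\<close> and then
  a \<open>0\<close> or the end; a string agreeing with \<open>Y\<close> up to position \<open>q(k) + 1\<close> matches neither.\<close>
lemma not_sublist_one_take:
  assumes Y: "0 \<notin> set Y" "1 \<notin> set Y" and X: "X \<in> {[], [5], [5, 1]}"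
    and s: "take (Suc (q k)) s = take (Suc (q k)) Y" "q k < length Y"
    and q: "\<And>l. l \<le> k \<Longrightarrow> q l \<le> q k"
    and after_X: "\<And>R. X = [5, 1] \<Longrightarrow> \<not> prefix s (Y @ 4 # R)"
  shows "\<not> sublist (1 # s) (dict K X Y @ words Y q k @ replicate j 0)"
proof
  assume "sublist (1 # s) (dict K X Y @ words Y q k @ replicate j 0)"
  then obtain A B0 where "A @ 1 # (s @ B0) = dict K X Y @ (words Y q k @ replicate j 0)"
    by (auto simp: sublist_def)
  thus False
  proof (cases rule: append_Cons_eq_append_cases)
    case (left B')
    hence "X = [5, 1]" "B' = Y @ [4]" using dict_split_one[OF Y(2) X] by blast+
    hence "Y @ 4 # words Y q k @ replicate j 0 = s @ B0" using left(2) by simp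
    hence "prefix s (Y @ 4 # words Y q k @ replicate j 0)" by (rule prefixI)
    thus False using after_X \<open>X = [5, 1]\<close> by blast
  next
    case (right A')
    from right(2)[symmetric] show False
    proof (cases rule: append_Cons_eq_append_cases)
      case (left B')
      then obtain l R where l: "l < k" "B' = take (q (Suc l)) Y @ R" "R = [] \<or> hd R = 0"
        using words_split_one[OF Y(2)] by metis
      have ql: "q (Suc l) \<le> q k" using q l(1) by simp
      have "length (take (Suc (q k)) s) = Suc (q k)" using s by simp
      hence "Suc (q k) \<le> length s" by simp
      hence "length (take (q (Suc l)) Y) < length (s @ B0)" using ql by simp
      hence "(s @ B0) ! q (Suc l) = (R @ replicate j 0) ! 0" "R @ replicate j 0 \<noteq> []"
        using left(2) l(2) ql s(2) by (auto simp: nth_append)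
      moreover have "(s @ B0) ! q (Suc l) = Y ! q (Suc l)"
        using s ql \<open>Suc (q k) \<le> length s\<close>
        by (metis le_imp_less_Suc nth_append nth_take less_le_trans)
      moreover have "Y ! q (Suc l) \<in> set Y" using ql s(2) by simp
      ultimately show False using Y(1) l(3) by (cases R) (auto simp: hd_conv_nth)
    next
      case (right A'')
      hence "1 \<in> set (replicate j (0::nat))" by simp
      thus False by simp
    qed
  qed
qed

text \<open>\<open>Y3 r = (2\<^sup>r 3)\<^sup>r\<close>, and word \<open>i\<close> copies the prefix of \<open>Y3 r\<close> ending in \<open>3 2\<^sup>i\<close>.\<close>

definition block3 :: "nat \<Rightarrow> nat list" where
  "block3 r = replicate r 2 @ [3]"

definition Y3 :: "nat \<Rightarrow> nat list" where
  "Y3 r = concat (replicate r (block3 r))"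

definition q3 :: "nat \<Rightarrow> nat \<Rightarrow> nat" where
  "q3 r i = i * (r + 2)"

lemma mono_q3: "mono (q3 r)"
  unfolding q3_def by (rule monoI) (rule mult_le_mono1)

lemma set_Y3: "set (Y3 r) \<subseteq> {2, 3}"
  by (auto simp: Y3_def block3_def)

lemma length_Y3: "length (Y3 r) = r * (r + 1)"
  by (simp add: Y3_def block3_def length_concat sum_list_replicate)

lemma take_q3_Y3:
  assumes "l < r"
  shows "take (q3 r l) (Y3 r) = concat (replicate l (block3 r)) @ replicate l 2"
proof -
  have "r = l + Suc (r - Suc l)" using assms by simp
  hence "replicate r (block3 r) = replicate l (block3 r) @ replicate (Suc (r - Suc l)) (block3 r)"
    by (metis replicate_add)
  hence "Y3 r = concat (replicate l (block3 r)) @ replicate r 2 @ 3 # concat (replicate (r - Suc l) (block3 r))"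
    by (simp add: Y3_def block3_def)
  moreover have "length (concat (replicate l (block3 r))) = l * (r + 1)"
    by (simp add: block3_def length_concat sum_list_replicate)
  moreover have "q3 r l = l * (r + 1) + l" by (simp add: q3_def)
  ultimately show ?thesis using assms by simp
qed

lemma q3_le_length_Y3: "l < r \<Longrightarrow> q3 r l \<le> length (Y3 r)"
  using arg_cong[OF take_q3_Y3, of l r length]
  by (simp add: block3_def length_concat sum_list_replicate q3_def algebra_simps)

lemma take_q3_Y3_Suc:
  assumes "Suc l < r"
  shows "take (q3 r (Suc l)) (Y3 r) = concat (replicate l (block3 r)) @ replicate r 2 @ 3 # replicate (Suc l) 2"
proof -
  have "concat (replicate (Suc l) (block3 r)) = concat (replicate l (block3 r)) @ block3 r"
    by (simp flip: replicate_append_same)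
  thus ?thesis using take_q3_Y3[OF assms] by (simp add: block3_def)
qed

lemma take_q3_Y3_Suc_eq:
  assumes "Suc i < r"
  shows "take (q3 r (Suc i)) (Y3 r) = take (q3 r i) (Y3 r) @ replicate (r - i) 2 @ 3 # replicate (Suc i) 2"
proof -
  have "replicate r (2::nat) = replicate i 2 @ replicate (r - i) 2"
    using assms by (simp flip: replicate_add)
  thus ?thesis using take_q3_Y3_Suc[OF assms] take_q3_Y3[of i r] assms by simp
qed

lemma append_Cons_replicate_eq:
  assumes "Z @ c # replicate a d = Z' @ c # replicate b d" "c \<noteq> d"
  shows "a = b"
proof -
  have "length (takeWhile (\<lambda>x. x = d) (rev (Z @ c # replicate n d))) = n" for Z n
    using assms(2) by (subst rev_append) (simp, subst takeWhile_append2, auto)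
  from this[of Z a] this[of Z' b] show ?thesis using assms(1) by simp
qed

text \<open>In a text built on \<open>Y3\<close>, a zero is preceded by \<open>3 2\<^sup>j\<close> only at the start of a word \<open>j + 1\<close>.\<close>
lemma three_twos_zero_sublist_less:
  assumes X: "0 \<notin> set X" and "k < r"
    and "sublist (3 # replicate j 2 @ [0]) (dict K X (Y3 r) @ words (Y3 r) (q3 r) k)"
  shows "j < k"
proof -
  have Y: "0 \<notin> set (Y3 r)" using set_Y3 by fastforce
  obtain A0 B where AB: "(A0 @ 3 # replicate j 2) @ 0 # B = dict K X (Y3 r) @ words (Y3 r) (q3 r) k"
    using assms(3) by (auto simp: sublist_def)
  define A where "A = A0 @ 3 # replicate j (2::nat)"
  have last_A: "A \<noteq> [] \<and> last A \<in> {2, 3}" by (simp add: A_def last_append)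
  from AB[folded A_def] show ?thesis
  proof (cases rule: append_Cons_eq_append_cases)
    case (left B')
    hence "replicate K 0 @ X @ Y3 r @ [4] = A @ 0 # B'" by (simp add: dict_def)
    moreover have "0 \<notin> set (X @ Y3 r @ [4])" using X Y by simp
    ultimately obtain t where "A = replicate t 0" by (blast dest: replicate_append_eq_append_Cons)
    thus ?thesis using last_A by (cases "t = 0") simp_all
  next
    case (right A')
    then obtain l t where l: "l < k" "t \<le> l" "A' = words (Y3 r) (q3 r) l @ replicate t 0"
      using words_split_zero[OF Y] by metis
    show ?thesis
    proof (cases t)
      case (Suc t')
      hence "last A = 0" using right(1) l(3) by (simp add: last_append)
      thus ?thesis using last_A by simp
    next
      case 0
      show ?thesis
      proof (cases l)
        case 0
        thus ?thesis using last_A right(1) l(3) \<open>t = 0\<close> by (simp add: dict_def)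
      next
        case (Suc l')
        hence "A = (dict K X (Y3 r) @ words (Y3 r) (q3 r) l' @ replicate (Suc l') 0 @ 1 #
            concat (replicate l' (block3 r)) @ replicate r 2) @ 3 # replicate (Suc l') 2"
          using right(1) l \<open>t = 0\<close> \<open>k < r\<close> take_q3_Y3_Suc[of l' r] by (simp add: word_def)
        hence "j = Suc l'" using append_Cons_replicate_eq[of A0 3 j 2] by (simp add: A_def)
        thus ?thesis using l(1) Suc by simp
      qed
    qed
  qed
qed

section \<open>Phrase counts of the constructed texts\<close>

lemma take_snoc_zero_not_prefix:
  fixes Y :: "nat list"
  assumes "n \<le> length Y" "0 \<notin> set Y"
  shows "\<not> prefix (take n Y @ [0]) (Y @ 4 # R)"
proof
  assume "prefix (take n Y @ [0]) (Y @ 4 # R)"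
  then obtain zs where "Y @ 4 # R = take n Y @ 0 # zs" by (auto simp: prefix_def)
  hence "(Y @ 4 # R) ! n = (take n Y @ 0 # zs) ! n" by simp
  also have "\<dots> = 0" using assms(1) by (simp add: nth_append)
  finally have "(Y @ 4 # R) ! n = 0" .
  moreover have "(Y @ 4 # R) ! n \<in> insert 4 (set Y)"
    using assms(1) by (cases "n < length Y") (auto simp: nth_append)
  ultimately show False using assms(2) by auto
qed

text \<open>A word splits after its zeros and after \<open>1 Y[1..q(i + 1)]\<close>.\<close>
lemma lzs_word_ge_two:
  assumes Y: "0 \<notin> set Y" "1 \<notin> set Y" and X: "X \<in> {[], [5], [5, 1]}"
    and q: "mono q" "q i < q (Suc i)" "q (Suc i) \<le> length Y"
    and rest: "rest = [] \<or> hd rest = 0"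
  shows "2 + lzs (dict K X Y @ words Y q (Suc i)) rest
    \<le> lzs (dict K X Y @ words Y q i) (word Y q (Suc i) @ rest)"
proof -
  define P where "P = dict K X Y @ words Y q i"
  define s where "s = take (q (Suc i)) Y @ [0]"
  have "\<not> sublist (replicate (Suc i) 0 @ [1]) P"
    unfolding P_def using not_sublist_zeros_one[OF Y X] by blast
  hence "Suc (lzs (P @ replicate (Suc i) 0) ((1 # take (q (Suc i)) Y) @ rest))
      \<le> lzs P (replicate (Suc i) 0 @ (1 # take (q (Suc i)) Y) @ rest)"
    using lzs_not_extendable_ge[of "replicate (Suc i) 0" "(1 # take (q (Suc i)) Y) @ rest" P] by simp
  moreover have "\<not> sublist (1 # s) (P @ replicate (Suc i) 0)"
    unfolding P_def append.assoc
  proof (rule not_sublist_one_take[OF Y X])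
    show "take (Suc (q i)) s = take (Suc (q i)) Y" using q by (simp add: s_def min_def)
    show "\<And>R. \<not> prefix s (Y @ 4 # R)"
      unfolding s_def using take_snoc_zero_not_prefix[OF q(3) Y(1)] .
  qed (use q in \<open>auto dest: monoD\<close>)
  hence "Suc (lzs (P @ replicate (Suc i) 0 @ 1 # take (q (Suc i)) Y) rest)
      \<le> lzs (P @ replicate (Suc i) 0) ((1 # take (q (Suc i)) Y) @ rest)"
    using rest lzs_not_extendable_ge[of "1 # take (q (Suc i)) Y" rest "P @ replicate (Suc i) 0"]
    by (auto simp: s_def)
  ultimately show ?thesis by (simp add: P_def word_def)
qed

text \<open>Without a \<open>1\<close> in the dictionary a word also splits inside \<open>Y[1..q(i + 1)]\<close>, namely in front of
  its last block \<open>2\<^sup>r\<^sup>-\<^sup>i 3 2\<^sup>i\<^sup>+\<^sup>1\<close>, because \<open>3 2\<^sup>i\<^sup>+\<^sup>1 0\<close> does not occur earlier.\<close>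
lemma lzs_word_ge_three:
  assumes X: "X \<in> {[], [5]}" and "Suc i < r" and rest: "rest = [] \<or> hd rest = 0"
  shows "3 + lzs (dict K X (Y3 r) @ words (Y3 r) (q3 r) (Suc i)) rest
    \<le> lzs (dict K X (Y3 r) @ words (Y3 r) (q3 r) i) (word (Y3 r) (q3 r) (Suc i) @ rest)"
proof -
  have Y: "0 \<notin> set (Y3 r)" "1 \<notin> set (Y3 r)" using set_Y3 by fastforce+
  have X': "X \<in> {[], [5], [5, 1]}" using X by auto
  define P where "P = dict K X (Y3 r) @ words (Y3 r) (q3 r) i"
  define t where "t = take (q3 r i) (Y3 r)"
  define D where "D = replicate (r - i) (2::nat) @ 3 # replicate (Suc i) 2"
  have word: "word (Y3 r) (q3 r) (Suc i) = replicate (Suc i) 0 @ (1 # t) @ D"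
    using take_q3_Y3_Suc_eq[OF \<open>Suc i < r\<close>] by (simp add: word_def t_def D_def)
  have D2: "hd D = 2" "D \<noteq> []" using \<open>Suc i < r\<close> by (simp_all add: D_def)
  have "\<not> sublist (replicate (Suc i) 0 @ [1]) P"
    unfolding P_def using not_sublist_zeros_one[OF Y X'] by blast
  hence zeros_phrase: "Suc (lzs (P @ replicate (Suc i) 0) ((1 # t) @ D @ rest))
      \<le> lzs P (replicate (Suc i) 0 @ (1 # t) @ D @ rest)"
    using lzs_not_extendable_ge[of "replicate (Suc i) 0" "(1 # t) @ D @ rest" P] by simp
  have q3: "q3 r i < q3 r (Suc i)" "q3 r (Suc i) \<le> length (Y3 r)"
    using q3_le_length_Y3[OF \<open>Suc i < r\<close>] by (simp_all add: q3_def)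
  hence "length t = q3 r i" by (simp add: t_def)
  have "take (Suc (q3 r i)) (Y3 r) = take (Suc (q3 r i)) (take (q3 r (Suc i)) (Y3 r))"
    using q3(1) by simp
  also have "\<dots> = take (Suc (length t)) (t @ D)"
    using take_q3_Y3_Suc_eq[OF \<open>Suc i < r\<close>] \<open>length t = q3 r i\<close> by (simp add: t_def D_def)
  also have "\<dots> = t @ [2]" using D2 by (cases D) simp_all
  finally have "t @ [2] = take (Suc (q3 r i)) (Y3 r)" ..
  have "\<not> sublist (1 # t @ [2]) (P @ replicate (Suc i) 0)"
    unfolding P_def append.assoc
    by (rule not_sublist_one_take[OF Y X'])
      (use X \<open>t @ [2] = _\<close> q3 in \<open>auto dest: monoD[OF mono_q3]\<close>)
  hence one_phrase: "Suc (lzs (P @ replicate (Suc i) 0 @ 1 # t) (D @ rest))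
      \<le> lzs (P @ replicate (Suc i) 0) ((1 # t) @ D @ rest)"
    using D2 lzs_not_extendable_ge[of "1 # t" "D @ rest" "P @ replicate (Suc i) 0"] by simp
  have "\<not> sublist (D @ [0]) (P @ replicate (Suc i) 0 @ 1 # t)"
  proof
    assume "sublist (D @ [0]) (P @ replicate (Suc i) 0 @ 1 # t)"
    moreover have "sublist (3 # replicate (Suc i) 2 @ [0]) (D @ [0])" by (simp add: D_def)
    ultimately have "sublist (3 # replicate (Suc i) 2 @ [0]) ((P @ replicate (Suc i) 0 @ 1 # t) @ D)"
      by (meson sublist_append_rightI sublist_order.order_trans)
    hence "sublist (3 # replicate (Suc i) 2 @ [0])
        (dict K X (Y3 r) @ words (Y3 r) (q3 r) (Suc i))"
      using word by (simp add: P_def)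
    moreover have "0 \<notin> set X" using X by auto
    ultimately show False using three_twos_zero_sublist_less \<open>Suc i < r\<close> by blast
  qed
  hence block_phrase: "Suc (lzs (P @ replicate (Suc i) 0 @ 1 # t @ D) rest)
      \<le> lzs (P @ replicate (Suc i) 0 @ 1 # t) (D @ rest)"
    using rest D2 lzs_not_extendable_ge[of D rest "P @ replicate (Suc i) 0 @ 1 # t"] by auto
  from zeros_phrase one_phrase block_phrase show ?thesis using word by (simp add: P_def)
qed

lemma zss_dict_words_ge:
  assumes "\<And>i rest. i < k \<Longrightarrow> rest = [] \<or> hd rest = 0 \<Longrightarrow>
    c + lzs (D @ words Y q (Suc i)) rest \<le> lzs (D @ words Y q i) (word Y q (Suc i) @ rest)"
  shows "c * k \<le> zss (D @ words Y q k @ pad)"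
proof -
  have main: "c * m + lzs (D @ words Y q m) rest \<le> lzs D (words Y q m @ rest)"
    if "m \<le> k" "rest = [] \<or> hd rest = 0" for m rest
    using that
  proof (induction m arbitrary: rest)
    case (Suc m)
    have "c + lzs (D @ words Y q (Suc m)) rest \<le> lzs (D @ words Y q m) (word Y q (Suc m) @ rest)"
      using assms Suc.prems by simp
    moreover have "c * m + lzs (D @ words Y q m) (word Y q (Suc m) @ rest)
        \<le> lzs D (words Y q m @ word Y q (Suc m) @ rest)"
      using Suc.IH[of "word Y q (Suc m) @ rest"] Suc.prems by (simp add: word_def)
    ultimately show ?case by simp
  qed simp
  have "c * k \<le> lzs D (words Y q k)" using main[of k "[]"] by simp
  also have "\<dots> \<le> lzs [] (D @ words Y q k)" using lzs_append_dict_le[of "[]" D] by simp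
  also have "\<dots> \<le> zss (D @ words Y q k @ pad)"
    unfolding zss_def using lzs_le_append[of "[]" "D @ words Y q k" pad] by simp
  finally show ?thesis .
qed

lemma zss_dict_words_le:
  assumes "\<And>i. i < k \<Longrightarrow> sublist (word Y q (Suc i)) D"
  shows "zss (D @ words Y q k @ s) \<le> zss D + k + lzs (D @ words Y q k) s"
proof -
  have "lzs D (words Y q m) \<le> m" if "m \<le> k" for m
    using that
  proof (induction m)
    case (Suc m)
    have "sublist (word Y q (Suc m)) (D @ words Y q m)"
      using assms Suc.prems by (meson Suc_le_lessD sublist_append_rightI sublist_order.order_trans)
    hence "lzs (D @ words Y q m) (word Y q (Suc m)) \<le> 1"
      using lzs_phrase_le[of "word Y q (Suc m)" "D @ words Y q m" "[]"] by (simp add: word_def)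
    thus ?case using lzs_append_le[of D "words Y q m" "word Y q (Suc m)"] Suc by simp
  qed simp
  from this[of k] show ?thesis
    using lzs_append_le[of "[]" D "words Y q k @ s"] lzs_append_le[of D "words Y q k" s]
    by (simp add: zss_def)
qed

lemma word_sublist_dict: "i \<le> K \<Longrightarrow> sublist (word Y q i) (dict K [1] Y)"
proof -
  assume "i \<le> K"
  hence "replicate K (0::nat) = replicate (K - i) 0 @ replicate i 0" by (simp flip: replicate_add)
  hence "dict K [1] Y = replicate (K - i) 0 @ word Y q i @ drop (q i) Y @ [4]"
    by (simp add: dict_def word_def)
  thus ?thesis by (metis sublist_appendI)
qed

lemma zss_dict_le: "K \<le> 2 ^ n \<Longrightarrow> zss (dict K [1] Y) \<le> n + 3 + lzs (replicate K 0 @ [1]) Y"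
proof -
  assume "K \<le> 2 ^ n"
  have single: "lzs p [x] \<le> 1" for p and x :: nat using lzs_le_length[of p "[x]"] by simp
  have "zss (dict K [1] Y) \<le> Suc n + lzs (replicate K 0) ([1] @ Y @ [4])"
    using lzs_replicate_le[OF \<open>K \<le> 2 ^ n\<close>, of "[]" 0 "[1] @ Y @ [4]"] by (simp add: zss_def dict_def)
  also have "\<dots> \<le> Suc n + 1 + lzs (replicate K 0 @ [1]) (Y @ [4])"
    using lzs_append_le[of "replicate K 0" "[1]" "Y @ [4]"] single[of "replicate K 0" 1] by simp
  also have "\<dots> \<le> n + 3 + lzs (replicate K 0 @ [1]) Y"
    using lzs_append_le[of "replicate K 0 @ [1]" Y "[4]"] single[of "replicate K 0 @ [1] @ Y" 4]
    by simp
  finally show ?thesis .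
qed

lemma lzs_Y3_le: "r \<le> 2 ^ n \<Longrightarrow> lzs P (Y3 r) \<le> 2 * n + 2"
proof (cases r)
  case (Suc r')
  assume "r \<le> 2 ^ n"
  have "Y3 r = replicate r 2 @ [3] @ concat (replicate r' (block3 r))"
    using Suc by (simp add: Y3_def block3_def)
  moreover have "lzs P (replicate r 2 @ [3] @ concat (replicate r' (block3 r)))
      \<le> Suc n + lzs (P @ replicate r 2) ([3] @ concat (replicate r' (block3 r)))"
    by (rule lzs_replicate_le) fact
  moreover have "lzs (P @ replicate r 2) ([3] @ concat (replicate r' (block3 r)))
      \<le> 1 + lzs (P @ block3 r) (concat (replicate r' (block3 r)))"
    using lzs_phrase_le[of "[3]" "P @ replicate r 2"] by (simp add: block3_def)
  moreover have "lzs (P @ concat (replicate 1 (block3 r))) (concat (replicate r' (block3 r)) @ [])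
      \<le> n + lzs (P @ concat (replicate (1 + r') (block3 r))) []"
    using Suc \<open>r \<le> 2 ^ n\<close> by (intro lzs_concat_replicate_le) (auto simp: block3_def)
  ultimately show ?thesis by simp
qed (simp add: Y3_def)

text \<open>\<open>text3 r X\<close> has \<open>r - 1\<close> words and length \<open>\<Theta>(r\<^sup>3)\<close>, \<open>text2 m X\<close> has \<open>m\<close> words and length
  \<open>\<Theta>(m\<^sup>2)\<close>. Below they are padded to arbitrary length with the fresh symbol \<open>6\<close>.\<close>

definition text3 :: "nat \<Rightarrow> nat list \<Rightarrow> nat list" where
  "text3 r X = dict r X (Y3 r) @ words (Y3 r) (q3 r) (r - 1)"

definition text2 :: "nat \<Rightarrow> nat list \<Rightarrow> nat list" where
  "text2 m X = dict m X (replicate m 2) @ words (replicate m 2) id m"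

lemma three_mul_le_zss_text3:
  assumes "X \<in> {[], [5]}"
  shows "3 * (r - 1) \<le> zss (text3 r X @ pad)"
  unfolding text3_def append.assoc
proof (rule zss_dict_words_ge)
  fix i and rest :: "nat list" assume "i < r - 1" "rest = [] \<or> hd rest = 0"
  thus "3 + lzs (dict r X (Y3 r) @ words (Y3 r) (q3 r) (Suc i)) rest
      \<le> lzs (dict r X (Y3 r) @ words (Y3 r) (q3 r) i) (word (Y3 r) (q3 r) (Suc i) @ rest)"
    using lzs_word_ge_three[OF assms] by simp
qed

lemma two_mul_le_zss_text3: "X \<in> {[], [5], [5, 1]} \<Longrightarrow> 2 * (r - 1) \<le> zss (text3 r X @ pad)"
  unfolding text3_def append.assoc
proof (rule zss_dict_words_ge)
  fix i and rest :: "nat list"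
  assume "X \<in> {[], [5], [5, 1]}" "i < r - 1" "rest = [] \<or> hd rest = 0"
  moreover have "0 \<notin> set (Y3 r)" "1 \<notin> set (Y3 r)" using set_Y3 by fastforce+
  moreover have "q3 r i < q3 r (Suc i)" "q3 r (Suc i) \<le> length (Y3 r)"
    using q3_le_length_Y3[of "Suc i" r] \<open>i < r - 1\<close> by (simp_all add: q3_def)
  ultimately show "2 + lzs (dict r X (Y3 r) @ words (Y3 r) (q3 r) (Suc i)) rest
      \<le> lzs (dict r X (Y3 r) @ words (Y3 r) (q3 r) i) (word (Y3 r) (q3 r) (Suc i) @ rest)"
    using mono_q3 by (intro lzs_word_ge_two) simp_all
qed

lemma two_mul_le_zss_text2:
  assumes "X \<in> {[], [5], [5, 1]}"
  shows "2 * m \<le> zss (text2 m X @ pad)"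
  unfolding text2_def append.assoc
proof (rule zss_dict_words_ge)
  fix i and rest :: "nat list" assume "i < m" "rest = [] \<or> hd rest = 0"
  thus "2 + lzs (dict m X (replicate m 2) @ words (replicate m 2) id (Suc i)) rest
      \<le> lzs (dict m X (replicate m 2) @ words (replicate m 2) id i)
          (word (replicate m 2) id (Suc i) @ rest)"
    using assms by (intro lzs_word_ge_two) (simp_all add: mono_def)
qed

lemma zss_text3_le:
  assumes "r \<le> 2 ^ n" "p \<le> 2 ^ n"
  shows "zss (text3 r [1] @ replicate p 6) \<le> (r - 1) + 4 * n + 6"
proof -
  have "zss (text3 r [1] @ replicate p 6) \<le> zss (dict r [1] (Y3 r)) + (r - 1)
      + lzs (text3 r [1]) (replicate p 6)"
    unfolding text3_def append.assoc
    by (rule zss_dict_words_le, rule word_sublist_dict) simp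
  moreover have "zss (dict r [1] (Y3 r)) \<le> n + 3 + (2 * n + 2)"
    using zss_dict_le[OF assms(1), of "Y3 r"] lzs_Y3_le[OF assms(1), of "replicate r 0 @ [1]"]
    by simp
  moreover have "lzs (text3 r [1]) (replicate p 6) \<le> Suc n"
    using lzs_replicate_le[OF assms(2), of _ 6 "[]"] by simp
  ultimately show ?thesis by simp
qed

lemma zss_text2_le:
  assumes "m \<le> 2 ^ n" "p \<le> 2 ^ n"
  shows "zss (text2 m [1] @ replicate p 6) \<le> m + 3 * n + 5"
proof -
  have "zss (text2 m [1] @ replicate p 6) \<le> zss (dict m [1] (replicate m 2)) + m
      + lzs (text2 m [1]) (replicate p 6)"
    unfolding text2_def append.assoc
    by (rule zss_dict_words_le, rule word_sublist_dict) simp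
  moreover have "zss (dict m [1] (replicate m 2)) \<le> n + 3 + Suc n"
    using zss_dict_le[OF assms(1), of "replicate m 2"]
      lzs_replicate_le[OF assms(1), of "replicate m 0 @ [1]" "2::nat" "[]"]
    by simp
  moreover have "lzs (text2 m [1]) (replicate p 6) \<le> Suc n"
    using lzs_replicate_le[OF assms(2), of _ 6 "[]"] by simp
  ultimately show ?thesis by simp
qed

lemma length_words_le: "length (words Y q k) \<le> k * (k + 1 + length Y)"
  by (induction k) (auto simp: word_def)

lemma length_text3: "r \<le> length (text3 r [1])" "length (text3 r [1]) \<le> 2 * (r + 1) ^ 3"
proof -
  show "r \<le> length (text3 r [1])" by (simp add: text3_def dict_def)
  have "(r - 1) * (r - 1 + 1 + length (Y3 r)) \<le> r * (r + 1 + r * (r + 1))"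
    by (intro mult_le_mono) (auto simp: length_Y3)
  hence "length (words (Y3 r) (q3 r) (r - 1)) \<le> r * (r + 1 + r * (r + 1))"
    using length_words_le[of "Y3 r" "q3 r" "r - 1"] by linarith
  thus "length (text3 r [1]) \<le> 2 * (r + 1) ^ 3"
    by (simp add: text3_def dict_def length_Y3 power3_eq_cube algebra_simps)
qed

lemma length_text2: "m \<le> length (text2 m [1])" "length (text2 m [1]) \<le> 3 * (m + 1) ^ 2"
proof -
  show "m \<le> length (text2 m [1])" by (simp add: text2_def dict_def)
  have "length (words (replicate m (2::nat)) id m) \<le> m * (m + 1 + m)"
    using length_words_le[of "replicate m 2" id m] by simp
  thus "length (text2 m [1]) \<le> 3 * (m + 1) ^ 2"
    by (simp add: text2_def dict_def power2_eq_square algebra_simps)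
qed

lemma ed_dict:
  "ed (dict K [1] Y @ Z) (dict K [5] Y @ Z) = 1"
  "ed (dict K [1] Y @ Z) (dict K [5, 1] Y @ Z) = 1"
  "ed (dict K [1] Y @ Z) (dict K [] Y @ Z) = 1"
  using ed_substitute[of "1::nat" 5 "replicate K 0" "Y @ 4 # Z"]
    ed_insert[of "replicate K 0" "1 # Y @ 4 # Z" "5::nat"]
    ed_delete[of "replicate K 0" "1::nat" "Y @ 4 # Z"] by (simp_all add: dict_def)

section \<open>Sensitivity bounds\<close>

lemma ex_last_le:
  fixes N :: "nat \<Rightarrow> nat"
  assumes "\<And>r. r \<le> N r" "N r0 \<le> n"
  obtains r where "r0 \<le> r" "N r \<le> n" "n < N (Suc r)"
proof -
  define r where "r = (GREATEST r. N r \<le> n)"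
  have bound: "\<forall>y. N y \<le> n \<longrightarrow> y \<le> n" using assms(1) le_trans by blast
  have "N r \<le> n" unfolding r_def by (rule GreatestI_nat[where k = r0 and b = n]) (use assms bound in auto)
  moreover have "r0 \<le> r" unfolding r_def by (rule Greatest_le_nat[where b = n]) (use assms bound in auto)
  moreover have "\<not> N (Suc r) \<le> n"
  proof
    assume "N (Suc r) \<le> n"
    hence "Suc r \<le> r" unfolding r_def by (rule Greatest_le_nat[where b = n]) (use bound in auto)
    thus False by simp
  qed
  ultimately show thesis using that by simp
qed

lemma liminf_ge_if_approx:
  assumes "\<And>R. 1 \<le> R \<Longrightarrow> \<forall>\<^sub>F n in sequentially. c - C / sqrt (real R) \<le> f n"
  shows "ereal c \<le> liminf (\<lambda>n. ereal (f n))"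
proof (unfold le_Liminf_iff, intro allI impI)
  fix y :: ereal assume "y < ereal c"
  show "\<forall>\<^sub>F n in sequentially. y < ereal (f n)"
  proof (cases y)
    case (real y')
    define R :: nat where "R = nat \<lceil>(\<bar>C\<bar> / (c - y')) ^ 2\<rceil> + 1"
    have "y' < c" using \<open>y < ereal c\<close> real by simp
    have "0 < R" by (simp add: R_def)
    hence "0 < sqrt (real R)" by simp
    have "(\<bar>C\<bar> / (c - y')) ^ 2 < real R" unfolding R_def by linarith
    hence "\<bar>C\<bar> / (c - y') < sqrt (real R)" by (simp add: real_less_rsqrt)
    hence "C < (c - y') * sqrt (real R)"
      using \<open>y' < c\<close> abs_ge_self[of C] by (simp add: divide_less_eq mult.commute)
    hence "C / sqrt (real R) < c - y'" using \<open>0 < sqrt (real R)\<close> by (simp add: divide_less_eq)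
    moreover have "\<forall>\<^sub>F n in sequentially. c - C / sqrt (real R) \<le> f n" by (rule assms) (simp add: R_def)
    ultimately show ?thesis using real by (auto elim: eventually_mono)
  qed (use \<open>y < ereal c\<close> in auto)
qed

lemma ratio_lower_bound:
  fixes c K y z z' :: real
  assumes "1 \<le> y" "0 \<le> c" "0 \<le> K" "c * y \<le> z'" "0 < z" "z \<le> y + K * sqrt y"
  shows "c - c * K / sqrt y \<le> z' / z"
proof -
  define s where "s = sqrt y"
  have s: "0 < s" "y = s * s" using assms(1) by (simp_all add: s_def)
  have "(c - c * K / s) * (s + K) = c * s - c * K * K / s" using s by (simp add: field_simps)
  also have "\<dots> \<le> c * s" using s assms by simp
  finally have "c - c * K / s \<le> c * s / (s + K)" using s assms by (simp add: pos_le_divide_eq)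
  also have "c * s / (s + K) = (s * (c * s)) / (s * (s + K))" using s(1) by simp
  also have "\<dots> = c * y / (y + K * s)" using s(2) by (simp add: algebra_simps)
  also have "\<dots> \<le> c * y / z" using assms s by (intro divide_left_mono) auto
  also have "\<dots> \<le> z' / z" using assms by (intro divide_right_mono) auto
  finally show ?thesis by (simp add: s_def)
qed

lemma difference_lower_bound:
  fixes a K y z z' :: real
  assumes "0 \<le> a" "0 \<le> K" "0 \<le> z" "a * y \<le> z'" "z \<le> y + K * sqrt y"
  shows "(a - 1) * z - a * K * sqrt z \<le> z' - z"
proof (cases "y \<le> z")
  case True
  hence "a * K * sqrt y \<le> a * K * sqrt z" using assms by (intro mult_left_mono) auto
  moreover have "a * z \<le> a * y + a * K * sqrt y" using assms(1,5) by (metis distrib_left mult.assoc mult_left_mono)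
  ultimately show ?thesis using assms(4) by (simp add: algebra_simps)
next
  case False
  hence "a * z \<le> z'" using assms by (meson less_imp_le mult_left_mono not_le order_trans)
  moreover have "0 \<le> a * K * sqrt z" using assms by simp
  ultimately show ?thesis by (simp add: algebra_simps)
qed

lemma zss_text3_padded_le:
  assumes "2 \<le> r" "p \<le> 2 * (r + 2) ^ 3"
  shows "real (zss (text3 r [1] @ replicate p 6)) \<le> real (r - 1) + 102 * sqrt (real (r - 1))"
proof -
  obtain n where n: "(r + 2) ^ 4 \<le> 2 ^ n" "real n \<le> 8 * (sqrt (real (r + 2)) + 1)"
    using ex_pow2_ge_sqrt[of "r + 2" 4] by auto
  have pow4: "(r + 2) ^ 4 = (r + 2) * (r + 2) ^ 3" by (simp add: eval_nat_numeral)
  have "r + 2 \<le> (r + 2) ^ 4" by (rule self_le_power) simp_all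
  hence "r \<le> (r + 2) ^ 4" by simp
  moreover have "2 * (r + 2) ^ 3 \<le> (r + 2) * (r + 2) ^ 3" by (intro mult_le_mono1) simp
  hence "p \<le> (r + 2) ^ 4" using assms(2) unfolding pow4 by linarith
  ultimately have "zss (text3 r [1] @ replicate p 6) \<le> (r - 1) + 4 * n + 6"
    using n(1) by (intro zss_text3_le) simp_all
  hence "real (zss (text3 r [1] @ replicate p 6)) \<le> real ((r - 1) + 4 * n + 6)"
    by (rule of_nat_mono)
  hence "real (zss (text3 r [1] @ replicate p 6)) \<le> real (r - 1) + 4 * real n + 6" by simp
  moreover have "real (r + 2) \<le> 4 * real (r - 1)" using assms(1) by linarith
  hence "sqrt (real (r + 2)) \<le> sqrt (4 * real (r - 1))" by (rule real_sqrt_le_mono)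
  hence "sqrt (real (r + 2)) \<le> 2 * sqrt (real (r - 1))" by (simp add: real_sqrt_mult)
  moreover have "1 \<le> sqrt (real (r - 1))" using assms(1) by simp
  ultimately show ?thesis using n(2) by argo
qed

lemma zss_text2_padded_le:
  assumes "1 \<le> m" "p \<le> 3 * (m + 2) ^ 2"
  shows "real (zss (text2 m [1] @ replicate p 6)) \<le> real m + 59 * sqrt (real m)"
proof -
  obtain n where n: "(m + 2) ^ 3 \<le> 2 ^ n" "real n \<le> 6 * (sqrt (real (m + 2)) + 1)"
    using ex_pow2_ge_sqrt[of "m + 2" 3] by auto
  have pow3: "(m + 2) ^ 3 = (m + 2) * (m + 2) ^ 2" by (simp add: eval_nat_numeral)
  have "m + 2 \<le> (m + 2) ^ 3" by (rule self_le_power) simp_all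
  hence "m \<le> (m + 2) ^ 3" by simp
  moreover have "3 * (m + 2) ^ 2 \<le> (m + 2) * (m + 2) ^ 2" using assms(1) by (intro mult_le_mono1) simp
  hence "p \<le> (m + 2) ^ 3" using assms(2) unfolding pow3 by linarith
  ultimately have "zss (text2 m [1] @ replicate p 6) \<le> m + 3 * n + 5"
    using n(1) by (intro zss_text2_le) simp_all
  hence "real (zss (text2 m [1] @ replicate p 6)) \<le> real (m + 3 * n + 5)" by (rule of_nat_mono)
  hence "real (zss (text2 m [1] @ replicate p 6)) \<le> real m + 3 * real n + 5" by simp
  moreover have "real (m + 2) \<le> 4 * real m" using assms(1) by linarith
  hence "sqrt (real (m + 2)) \<le> sqrt (4 * real m)" by (rule real_sqrt_le_mono)
  hence "sqrt (real (m + 2)) \<le> 2 * sqrt (real m)" by (simp add: real_sqrt_mult)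
  moreover have "1 \<le> sqrt (real m)" using assms(1) by simp
  ultimately show ?thesis using n(2) by argo
qed

lemma liminf_ratio_text3_ge:
  fixes f :: "nat \<Rightarrow> real"
  assumes lower: "\<And>r pad. c * (r - 1) \<le> zss (text3 r X @ pad)"
    and sens: "\<And>r p. real (zss (text3 r X @ replicate p 6)) / real (zss (text3 r [1] @ replicate p 6))
      \<le> f (length (text3 r [1]) + p)"
  shows "ereal (real c) \<le> liminf (\<lambda>n. ereal (f n))"
proof (rule liminf_ge_if_approx[where C = "real c * 102"])
  fix R :: nat assume "1 \<le> R"
  let ?N = "\<lambda>r. length (text3 r [1])"
  have "real c - real c * 102 / sqrt (real R) \<le> f n" if n: "?N (Suc R) \<le> n" for n
  proof -
    obtain r where r: "Suc R \<le> r" "?N r \<le> n" "n < ?N (Suc r)"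
      using ex_last_le[of ?N "Suc R" n, OF length_text3(1) n] by blast
    have r2: "2 \<le> r" using r(1) \<open>1 \<le> R\<close> by simp
    define p where "p = n - ?N r"
    have p: "p \<le> 2 * (r + 2) ^ 3" using r(3) length_text3(2)[of "Suc r"] by (simp add: p_def)
    define T where "T = text3 r [1] @ replicate p 6"
    define T' where "T' = text3 r X @ replicate p 6"
    have "real (c * (r - 1)) \<le> real (zss T')" unfolding T'_def using lower by (rule of_nat_mono)
    moreover have "T \<noteq> []" using r(1) length_text3(1)[of r] by (auto simp: T_def)
    hence "0 < zss T" using lzs_pos[of T "[]"] by (simp add: zss_def)
    ultimately have "real c - real c * 102 / sqrt (real (r - 1)) \<le> real (zss T') / real (zss T)"
      using r2 zss_text3_padded_le[OF r2 p, folded T_def] by (intro ratio_lower_bound) simp_all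
    moreover have "sqrt (real R) \<le> sqrt (real (r - 1))" using r(1) by simp
    hence "real c * 102 / sqrt (real (r - 1)) \<le> real c * 102 / sqrt (real R)"
      using \<open>1 \<le> R\<close> by (intro divide_left_mono) simp_all
    moreover have "?N r + p = n" using r(2) by (simp add: p_def)
    hence "real (zss T') / real (zss T) \<le> f n" using sens[of r p] by (simp only: T_def T'_def)
    ultimately show ?thesis by argo
  qed
  thus "\<forall>\<^sub>F n in sequentially. real c - real c * 102 / sqrt (real R) \<le> f n"
    by (rule eventually_sequentiallyI)
qed

lemma omega_text2:
  fixes f :: "nat \<Rightarrow> real"
  assumes lower: "\<And>m pad. 2 * m \<le> zss (text2 m X @ pad)"
    and sens: "\<And>m p. real (zss (text2 m X @ replicate p 6)) - real (zss (text2 m [1] @ replicate p 6))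
      \<le> f (length (text2 m [1]) + p)"
  shows "f \<in> \<Omega>(\<lambda>n. sqrt (real n))"
proof (rule landau_omega.bigI[where c = "1 / 12"])
  let ?N = "\<lambda>m. length (text2 m [1])"
  \<comment> \<open>\<open>m \<ge> 14000 \<ge> 118\<^sup>2\<close> makes the error term \<open>59 \<surd>m\<close> at most \<open>m / 2\<close>.\<close>
  have "1 / 12 * norm (sqrt (real n)) \<le> norm (f n)" if n: "?N 14000 \<le> n" for n
  proof -
    obtain m where m: "14000 \<le> m" "?N m \<le> n" "n < ?N (Suc m)"
      using ex_last_le[of ?N 14000 n, OF length_text2(1) n] by blast
    define p where "p = n - ?N m"
    have "n \<le> 3 * (m + 2) ^ 2" using m(3) length_text2(2)[of "Suc m"] by simp
    hence p: "p \<le> 3 * (m + 2) ^ 2" by (simp add: p_def)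
    have "?N m + p = n" using m(2) by (simp add: p_def)
    hence "real (zss (text2 m X @ replicate p 6)) - real (zss (text2 m [1] @ replicate p 6)) \<le> f n"
      using sens[of m p] by simp
    moreover have "real (2 * m) \<le> real (zss (text2 m X @ replicate p 6))" using lower by (rule of_nat_mono)
    moreover have "real (zss (text2 m [1] @ replicate p 6)) \<le> real m + 59 * sqrt (real m)"
      using m(1) by (intro zss_text2_padded_le p) simp
    moreover have "118 \<le> sqrt (real m)" using m(1) real_sqrt_le_mono[of "118\<^sup>2" "real m"] by simp
    hence "118 * sqrt (real m) \<le> sqrt (real m) * sqrt (real m)" by (intro mult_right_mono) simp_all
    hence "59 * sqrt (real m) \<le> real m / 2" by simp
    moreover have "(m + 2) ^ 2 \<le> (3 * m) ^ 2" using m(1) by (intro power_mono) simp_all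
    hence "n \<le> (6 * m) ^ 2" using \<open>n \<le> 3 * (m + 2) ^ 2\<close> by (simp add: power_mult_distrib)
    hence "sqrt (real n) \<le> 6 * real m" by (intro real_le_lsqrt) (simp_all flip: of_nat_power)
    ultimately have "sqrt (real n) / 12 \<le> f n" by simp
    thus ?thesis using abs_ge_self[of "f n"] by simp
  qed
  thus "\<forall>\<^sub>F n in sequentially. 1 / 12 * norm (sqrt (real n)) \<le> norm (f n)"
    by (rule eventually_sequentiallyI)
qed simp

lemma le_Sup_zss_pairs:
  fixes g :: "nat \<Rightarrow> nat \<Rightarrow> real" and P :: "nat list \<Rightarrow> nat list \<Rightarrow> bool"
  assumes "P xs ys" "\<And>A B. P A B \<Longrightarrow> length B \<le> L" "\<And>a b. g a b \<le> real a"
  shows "g (zss ys) (zss xs) \<le> Sup {g (zss T') (zss T) | T T'. P T T'}"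
proof (rule cSup_upper)
  show "g (zss ys) (zss xs) \<in> {g (zss T') (zss T) | T T'. P T T'}" using assms(1) by blast
  have "g (zss B) (zss A) \<le> real L" if "P A B" for A B
    using assms(3)[of "zss B" "zss A"] assms(2)[OF that] lzs_le_length[of "[]" B]
    by (simp add: zss_def)
  thus "bdd_above {g (zss T') (zss T) | T T'. P T T'}" by (auto intro: bdd_aboveI[where M = "real L"])
qed

lemma divide_of_nat_le: "real a / real b \<le> real a"
proof (cases "b = 0")
  case False
  hence "real a / real b \<le> real a / 1" by (intro divide_left_mono) simp_all
  thus ?thesis by simp
qed simp

lemma MS_sub_ge:
  fixes T T' :: "nat list"
  shows "length T' = length T \<Longrightarrow> ed T T' = 1 \<Longrightarrow> real (zss T') / real (zss T) \<le> MS_sub (length T)"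
  unfolding MS_sub_def
  by (rule le_Sup_zss_pairs[where g = "\<lambda>a b. real a / real b" and L = "length T"])
    (auto simp: divide_of_nat_le)

lemma MS_ins_ge:
  fixes T T' :: "nat list"
  shows "length T' = length T + 1 \<Longrightarrow> ed T T' = 1 \<Longrightarrow> real (zss T') / real (zss T) \<le> MS_ins (length T)"
  unfolding MS_ins_def
  by (rule le_Sup_zss_pairs[where g = "\<lambda>a b. real a / real b" and L = "length T + 1"])
    (auto simp: divide_of_nat_le)

lemma MS_del_ge:
  fixes T T' :: "nat list"
  shows "length T' + 1 = length T \<Longrightarrow> ed T T' = 1 \<Longrightarrow> real (zss T') / real (zss T) \<le> MS_del (length T)"
  unfolding MS_del_def
  by (rule le_Sup_zss_pairs[where g = "\<lambda>a b. real a / real b" and L = "length T"])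
    (auto simp: divide_of_nat_le)

lemma AS_sub_ge:
  fixes T T' :: "nat list"
  shows "length T' = length T \<Longrightarrow> ed T T' = 1 \<Longrightarrow> real (zss T') - real (zss T) \<le> AS_sub (length T)"
  unfolding AS_sub_def
  by (rule le_Sup_zss_pairs[where g = "\<lambda>a b. real a - real b" and L = "length T"]) auto

lemma AS_ins_ge:
  fixes T T' :: "nat list"
  shows "length T' = length T + 1 \<Longrightarrow> ed T T' = 1 \<Longrightarrow> real (zss T') - real (zss T) \<le> AS_ins (length T)"
  unfolding AS_ins_def
  by (rule le_Sup_zss_pairs[where g = "\<lambda>a b. real a - real b" and L = "length T + 1"]) auto

lemma AS_del_ge:
  fixes T T' :: "nat list"
  shows "length T' + 1 = length T \<Longrightarrow> ed T T' = 1 \<Longrightarrow> real (zss T') - real (zss T) \<le> AS_del (length T)"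
  unfolding AS_del_def
  by (rule le_Sup_zss_pairs[where g = "\<lambda>a b. real a - real b" and L = "length T"]) auto

lemma text3_edit:
  assumes "X \<in> {[5], [5, 1], []}"
  shows "ed (text3 r [1] @ pad) (text3 r X @ pad) = 1"
    and "length (text3 r X @ pad) + 1 = length (text3 r [1] @ pad) + length X"
  using assms ed_dict[of r "Y3 r" "words (Y3 r) (q3 r) (r - 1) @ pad"]
  by (auto simp: text3_def dict_def)

lemma text2_edit:
  assumes "X \<in> {[5], [5, 1], []}"
  shows "ed (text2 m [1] @ pad) (text2 m X @ pad) = 1"
    and "length (text2 m X @ pad) + 1 = length (text2 m [1] @ pad) + length X"
  using assms ed_dict[of m "replicate m 2" "words (replicate m 2) id m @ pad"]
  by (auto simp: text2_def dict_def)

lemma additive_sensitivity_text3: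
  assumes X: "X \<in> {[5], [5, 1], []}" and lower: "\<And>r. c * (r - 1) \<le> zss (text3 r X)"
  shows "\<exists>C>0. \<forall>m. \<exists>T T' :: nat list. zss T \<ge> m \<and> length T' + 1 = length T + length X
    \<and> ed T T' = 1 \<and> real (zss T') - real (zss T) \<ge> (real c - 1) * real (zss T) - C * sqrt (real (zss T))"
proof (intro exI[of _ "real c * 102 + 1"] conjI allI)
  fix m :: nat
  define r :: nat where "r = 2 ^ m + 2"
  define T where "T = text3 r [1]"
  define T' where "T' = text3 r X"
  define z where "z = real (zss T)"
  have "2 ^ m < r" by (simp add: r_def)
  hence "(2::nat) ^ m < 2 ^ zss T"
    using length_text3(1)[of r] length_less_pow2_zss[of T] unfolding T_def by linarith
  hence m: "m \<le> zss T" by simp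
  have edit: "length T' + 1 = length T + length X" "ed T T' = 1"
    using text3_edit[OF X, of r "[]"] by (simp_all add: T_def T'_def)
  have "z \<le> real (r - 1) + 102 * sqrt (real (r - 1))"
    using zss_text3_padded_le[of r 0] by (simp add: r_def z_def T_def)
  hence "(real c - 1) * z - real c * 102 * sqrt z \<le> real (zss T') - z"
    using lower[of r] by (intro difference_lower_bound) (simp_all add: z_def T'_def flip: of_nat_mult)
  moreover have "0 \<le> sqrt z" by (simp add: z_def)
  ultimately have "(real c - 1) * z - (real c * 102 + 1) * sqrt z \<le> real (zss T') - z"
    unfolding distrib_right by linarith
  with m edit show "\<exists>T T' :: nat list. zss T \<ge> m \<and> length T' + 1 = length T + length X \<and> ed T T' = 1
      \<and> real (zss T') - real (zss T) \<ge> (real c - 1) * real (zss T) - (real c * 102 + 1) * sqrt (real (zss T))"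
    by (auto simp: z_def)
qed simp

lemma sensitivity_substitution:
  "liminf (\<lambda>n. ereal (MS_sub n)) \<ge> 3
   \<and> (\<exists>c>0. \<forall>m. \<exists>T T' :: nat list. zss T \<ge> m \<and> length T' = length T \<and> ed T T' = 1 \<and>
        real (zss T') - real (zss T) \<ge> 2 * real (zss T) - c * sqrt (real (zss T)))
   \<and> AS_sub \<in> \<Omega>(\<lambda>n. sqrt (real n))"
proof (intro conjI)
  have "ereal (real 3) \<le> liminf (\<lambda>n. ereal (MS_sub n))"
  proof (rule liminf_ratio_text3_ge)
    show "3 * (r - 1) \<le> zss (text3 r [5] @ pad)" for r pad by (rule three_mul_le_zss_text3) simp
    show "real (zss (text3 r [5] @ replicate p 6)) / real (zss (text3 r [1] @ replicate p 6))
        \<le> MS_sub (length (text3 r [1]) + p)" for r p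
      using MS_sub_ge[where T = "text3 r [1] @ replicate p 6" and T' = "text3 r [5] @ replicate p 6"]
        text3_edit[of "[5]" r "replicate p 6"] by simp
  qed
  thus "liminf (\<lambda>n. ereal (MS_sub n)) \<ge> 3" by simp
  show "\<exists>c>0. \<forall>m. \<exists>T T' :: nat list. zss T \<ge> m \<and> length T' = length T \<and> ed T T' = 1 \<and>
      real (zss T') - real (zss T) \<ge> 2 * real (zss T) - c * sqrt (real (zss T))"
    using additive_sensitivity_text3[of "[5]" 3] three_mul_le_zss_text3[of "[5]" _ "[]"] by simp
  show "AS_sub \<in> \<Omega>(\<lambda>n. sqrt (real n))"
  proof (rule omega_text2)
    show "2 * m \<le> zss (text2 m [5] @ pad)" for m pad by (rule two_mul_le_zss_text2) simp
    show "real (zss (text2 m [5] @ replicate p 6)) - real (zss (text2 m [1] @ replicate p 6))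
        \<le> AS_sub (length (text2 m [1]) + p)" for m p
      using AS_sub_ge[where T = "text2 m [1] @ replicate p 6" and T' = "text2 m [5] @ replicate p 6"]
        text2_edit[of "[5]" m "replicate p 6"] by simp
  qed
qed

lemma sensitivity_insertion:
  "liminf (\<lambda>n. ereal (MS_ins n)) \<ge> 2
   \<and> (\<exists>c>0. \<forall>m. \<exists>T T' :: nat list. zss T \<ge> m \<and> length T' = length T + 1 \<and> ed T T' = 1 \<and>
        real (zss T') - real (zss T) \<ge> real (zss T) - c * sqrt (real (zss T)))
   \<and> AS_ins \<in> \<Omega>(\<lambda>n. sqrt (real n))"
proof (intro conjI)
  have "ereal (real 2) \<le> liminf (\<lambda>n. ereal (MS_ins n))"
  proof (rule liminf_ratio_text3_ge)
    show "2 * (r - 1) \<le> zss (text3 r [5, 1] @ pad)" for r pad by (rule two_mul_le_zss_text3) simp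
    show "real (zss (text3 r [5, 1] @ replicate p 6)) / real (zss (text3 r [1] @ replicate p 6))
        \<le> MS_ins (length (text3 r [1]) + p)" for r p
      using MS_ins_ge[where T = "text3 r [1] @ replicate p 6" and T' = "text3 r [5, 1] @ replicate p 6"]
        text3_edit[of "[5, 1]" r "replicate p 6"] by simp
  qed
  thus "liminf (\<lambda>n. ereal (MS_ins n)) \<ge> 2" by simp
  show "\<exists>c>0. \<forall>m. \<exists>T T' :: nat list. zss T \<ge> m \<and> length T' = length T + 1 \<and> ed T T' = 1 \<and>
      real (zss T') - real (zss T) \<ge> real (zss T) - c * sqrt (real (zss T))"
    using additive_sensitivity_text3[of "[5, 1]" 2] two_mul_le_zss_text3[of "[5, 1]" _ "[]"] by simp
  show "AS_ins \<in> \<Omega>(\<lambda>n. sqrt (real n))"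
  proof (rule omega_text2)
    show "2 * m \<le> zss (text2 m [5, 1] @ pad)" for m pad by (rule two_mul_le_zss_text2) simp
    show "real (zss (text2 m [5, 1] @ replicate p 6)) - real (zss (text2 m [1] @ replicate p 6))
        \<le> AS_ins (length (text2 m [1]) + p)" for m p
      using AS_ins_ge[where T = "text2 m [1] @ replicate p 6" and T' = "text2 m [5, 1] @ replicate p 6"]
        text2_edit[of "[5, 1]" m "replicate p 6"] by simp
  qed
qed

lemma sensitivity_deletion:
  "liminf (\<lambda>n. ereal (MS_del n)) \<ge> 3
   \<and> (\<exists>c>0. \<forall>m. \<exists>T T' :: nat list. zss T \<ge> m \<and> length T' + 1 = length T \<and> ed T T' = 1 \<and>
        real (zss T') - real (zss T) \<ge> 2 * real (zss T) - c * sqrt (real (zss T)))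
   \<and> AS_del \<in> \<Omega>(\<lambda>n. sqrt (real n))"
proof (intro conjI)
  have "ereal (real 3) \<le> liminf (\<lambda>n. ereal (MS_del n))"
  proof (rule liminf_ratio_text3_ge)
    show "3 * (r - 1) \<le> zss (text3 r [] @ pad)" for r pad by (rule three_mul_le_zss_text3) simp
    show "real (zss (text3 r [] @ replicate p 6)) / real (zss (text3 r [1] @ replicate p 6))
        \<le> MS_del (length (text3 r [1]) + p)" for r p
      using MS_del_ge[where T = "text3 r [1] @ replicate p 6" and T' = "text3 r [] @ replicate p 6"]
        text3_edit[of "[]" r "replicate p 6"] by simp
  qed
  thus "liminf (\<lambda>n. ereal (MS_del n)) \<ge> 3" by simp
  show "\<exists>c>0. \<forall>m. \<exists>T T' :: nat list. zss T \<ge> m \<and> length T' + 1 = length T \<and> ed T T' = 1 \<and>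
      real (zss T') - real (zss T) \<ge> 2 * real (zss T) - c * sqrt (real (zss T))"
    using additive_sensitivity_text3[of "[]" 3] three_mul_le_zss_text3[of "[]" _ "[]"] by simp
  show "AS_del \<in> \<Omega>(\<lambda>n. sqrt (real n))"
  proof (rule omega_text2)
    show "2 * m \<le> zss (text2 m [] @ pad)" for m pad by (rule two_mul_le_zss_text2) simp
    show "real (zss (text2 m [] @ replicate p 6)) - real (zss (text2 m [1] @ replicate p 6))
        \<le> AS_del (length (text2 m [1]) + p)" for m p
      using AS_del_ge[where T = "text2 m [1] @ replicate p 6" and T' = "text2 m [] @ replicate p 6"]
        text2_edit[of "[]" m "replicate p 6"] by simp
  qed
qed

theorem mainTheorem12:
  shows
  \<comment> \<open>substitutions\<close>
  "liminf (\<lambda>n. ereal (MS_sub n)) \<ge> 3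
   \<and> (\<exists>c>0. \<forall>m. \<exists>T T' :: nat list. zss T \<ge> m \<and> length T' = length T \<and> ed T T' = 1 \<and>
        real (zss T') - real (zss T) \<ge> 2 * real (zss T) - c * sqrt (real (zss T)))
   \<and> AS_sub \<in> \<Omega>(\<lambda>n. sqrt (real n))
   \<and> liminf (\<lambda>n. ereal (MS_ins n)) \<ge> 2
   \<and> (\<exists>c>0. \<forall>m. \<exists>T T' :: nat list. zss T \<ge> m \<and> length T' = length T + 1 \<and> ed T T' = 1 \<and>
        real (zss T') - real (zss T) \<ge> real (zss T) - c * sqrt (real (zss T)))
   \<and> AS_ins \<in> \<Omega>(\<lambda>n. sqrt (real n))
   \<and> liminf (\<lambda>n. ereal (MS_del n)) \<ge> 3
   \<and> (\<exists>c>0. \<forall>m. \<exists>T T' :: nat list. zss T \<ge> m \<and> length T' + 1 = length T \<and> ed T T' = 1 \<and>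
        real (zss T') - real (zss T) \<ge> 2 * real (zss T) - c * sqrt (real (zss T)))
   \<and> AS_del \<in> \<Omega>(\<lambda>n. sqrt (real n))"
  using sensitivity_substitution sensitivity_insertion sensitivity_deletion by blast

end
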